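(* Let $L$ be a finite distributive lattice and $x\in L$ a complemented element with complement $x'$. Then $\mathcal C_x(\mathcal J(L))$ is a convex polytope in $\mathbb R^{\mathcal J(L)}$ whose set of vertices (extreme points) is exactly $\mathcal D_x(\mathcal J(L))$.
   Context: $\mathcal J(L)$ is the set of join-irreducible elements of $L$ (elements covering exactly one element) with the induced order; for $y\in L$, $\eta(y):=\{j\in\mathcal J(L): j\le y\}$. Since $x$ is complemented, $\eta(x)$ and $\eta(x')$ partition $\mathcal J(L)$. A map $g$ on $\mathcal J(L)$ is nonincreasing if $j\le j'$ implies $g(j)\ge g(j')$. $\mathcal D_x(\mathcal J(L))$ is the set of maps $\xi:\mathcal J(L)\to\{-1,0,1\}$ such that $|\xi|$ is nonincreasing, $\xi(j)\ge0$ for $j\in\eta(x)$ and $\xi(j)\le0$ for $j\in\eta(x')$. $\mathcal C_x(\mathcal J(L))$ is the set of maps $f:\mathcal J(L)\to[-1,1]$ such that $|f|$ is nonincreasing, $f(j)\ge0$ for $j\in\eta(x)$ and $f(j)\le 0$ for $j\in\eta(x')$. *)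

theory Defs
  imports "HOL-Analysis.Analysis"
begin

definition covers :: "'a::order \<Rightarrow> 'a \<Rightarrow> bool" where
  "covers y j \<longleftrightarrow> y < j \<and> \<not> (\<exists>z. y < z \<and> z < j)"

definition JI :: "'a::order set" where
  "JI = {j. \<exists>!y. covers y j}"

definition eta :: "'a::order \<Rightarrow> 'a set" where
  "eta y = {j \<in> JI. j \<le> y}"

definition nonincr_on_JI :: "('a::order \<Rightarrow> real) \<Rightarrow> bool" where
  "nonincr_on_JI g \<longleftrightarrow> (\<forall>j\<in>JI. \<forall>j'\<in>JI. j \<le> j' \<longrightarrow> g j \<ge> g j')"

text \<open>The space R^{J(L)} is realised as the coordinate subspace of
  real^'a of vectors vanishing outside JI.\<close>
definition Cx :: "'a::{order,finite} \<Rightarrow> 'a \<Rightarrow> (real, 'a) vec set" where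
  "Cx x x' = {f. (\<forall>j. j \<notin> JI \<longrightarrow> f $ j = 0)
      \<and> (\<forall>j\<in>JI. -1 \<le> f $ j \<and> f $ j \<le> 1)
      \<and> nonincr_on_JI (\<lambda>j. \<bar>f $ j\<bar>)
      \<and> (\<forall>j\<in>eta x. f $ j \<ge> 0)
      \<and> (\<forall>j\<in>eta x'. f $ j \<le> 0)}"

definition Dx :: "'a::{order,finite} \<Rightarrow> 'a \<Rightarrow> (real, 'a) vec set" where
  "Dx x x' = {f. (\<forall>j. j \<notin> JI \<longrightarrow> f $ j = 0)
      \<and> (\<forall>j\<in>JI. f $ j \<in> {-1, 0, 1})
      \<and> nonincr_on_JI (\<lambda>j. \<bar>f $ j\<bar>)
      \<and> (\<forall>j\<in>eta x. f $ j \<ge> 0)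
      \<and> (\<forall>j\<in>eta x'. f $ j \<le> 0)}"

end

theory Submission
  imports Defs
begin

(* The only lattice-theoretic input is that every join-irreducible j of
   the finite distributive lattice L lies below x or below x' (j is join-prime and
   j <= top = sup x x').  Hence on every coordinate j of J(L) all points of C_x share
   one sign, so the absolute value |f j| is affine along segments of C_x.  From this:
   (1) C_x is convex;
   (2) every point v of D_x is extreme: in each coordinate v j is 1, -1, or 0 with a
       sign constraint, i.e. v j sits at a bound of the coordinate's range, and a
       proper convex combination can only reach a bound if both ends are there;
   (3) C_x is contained in the convex hull of D_x: writing s for the sign vector of f
       and m for the least nonzero |f j|, f = m s + (1 - m) h where h again lies in
       C_x and has strictly smaller support (induction on the support size).
   So C_x is the convex hull of the finite set D_x, hence a polytope, and its extreme
   points are exactly D_x. *)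

lemma lower_cover:
  fixes a j :: "'a::{finite,order}"
  assumes "a < j"
  shows "\<exists>y. covers y j \<and> a \<le> y"
proof -
  let ?A = "{z. a \<le> z \<and> z < j}"
  have "finite ?A" "a \<in> ?A" using assms by simp_all
  then obtain m where m: "m \<in> ?A" "a \<le> m" "\<forall>b\<in>?A. m \<le> b \<longrightarrow> m = b"
    using finite_has_maximal2 by blast
  have "covers m j"
    unfolding covers_def
  proof (intro conjI notI)
    show "m < j" using m by simp
  next
    assume "\<exists>z. m < z \<and> z < j"
    then obtain z where "m < z" "z < j" by blast
    then have "z \<in> ?A" using m by auto
    then show False using m \<open>m < z\<close> by auto
  qed
  then show ?thesis using m by blast
qed

(* Join-irreducibles of a finite distributive lattice are join-prime: if j <= a \<squnion> b
   then j = (j \<sqinter> a) \<squnion> (j \<sqinter> b), and two proper parts would lie below the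
   unique lower cover of j. *)
lemma JI_join_prime:
  fixes j a b :: "'a::{finite,distrib_lattice}"
  assumes "j \<in> JI" "j \<le> sup a b"
  shows "j \<le> a \<or> j \<le> b"
proof (rule ccontr)
  assume n: "\<not> (j \<le> a \<or> j \<le> b)"
  have eq: "j = sup (inf j a) (inf j b)"
    using assms(2) by (metis inf.absorb1 inf_sup_distrib1)
  have "inf j a < j" "inf j b < j" using n by (metis inf.absorb_iff1 inf.cobounded2 inf_le1 order.not_eq_order_implies_strict)+
  then obtain y1 y2 where y1: "covers y1 j" "inf j a \<le> y1"
    and y2: "covers y2 j" "inf j b \<le> y2"
    using lower_cover by metis
  have "y1 = y2" using assms(1) y1 y2 unfolding JI_def by blast
  then have "sup (inf j a) (inf j b) \<le> y1" using y1 y2 by simp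
  moreover have "y1 < j" using y1 unfolding covers_def by simp
  ultimately show False using eq by simp
qed

lemma JI_covered:
  fixes x x' :: "'a::{finite, distrib_lattice, bounded_lattice}"
  assumes "sup x x' = top"
  shows "JI \<subseteq> eta x \<union> eta x'"
  using JI_join_prime[where a = x and b = x'] assms unfolding eta_def by auto

lemma Cx_same_sign:
  assumes cover: "JI \<subseteq> eta x \<union> eta x'"
    and "f \<in> Cx x x'" "g \<in> Cx x x'" "j \<in> JI"
  shows "(f $ j \<ge> 0 \<and> g $ j \<ge> 0) \<or> (f $ j \<le> 0 \<and> g $ j \<le> 0)"
  using assms unfolding Cx_def by blast

lemma abs_convex_comb_same_sign:
  fixes a b u v :: real
  assumes "u \<ge> 0" "v \<ge> 0" "(a \<ge> 0 \<and> b \<ge> 0) \<or> (a \<le> 0 \<and> b \<le> 0)"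
  shows "\<bar>u * a + v * b\<bar> = u * \<bar>a\<bar> + v * \<bar>b\<bar>"
  using assms(3)
proof
  assume "a \<le> 0 \<and> b \<le> 0"
  then have "u * a \<le> 0" "v * b \<le> 0" using assms(1,2) by (auto simp: mult_nonneg_nonpos)
  then show ?thesis using \<open>a \<le> 0 \<and> b \<le> 0\<close> assms(1,2) by (simp add: abs_of_nonpos)
qed (use assms in simp)

(* Part (1): convexity.  Absolute values combine affinely, so the bounds and the
   monotonicity of |f| are preserved; the sign constraints are preserved anyway. *)
lemma Cx_convex:
  assumes cover: "JI \<subseteq> eta x \<union> eta x'"
  shows "convex (Cx x x')"
  unfolding convex_def
proof (intro ballI allI impI)
  fix f g :: "(real, 'a) vec" and u v :: real
  assume f: "f \<in> Cx x x'" and g: "g \<in> Cx x x'" and uv: "0 \<le> u" "0 \<le> v" "u + v = 1"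
  let ?h = "u *\<^sub>R f + v *\<^sub>R g"
  have abs_h: "\<bar>?h $ j\<bar> = u * \<bar>f $ j\<bar> + v * \<bar>g $ j\<bar>" if "j \<in> JI" for j
    using abs_convex_comb_same_sign[OF uv(1,2) Cx_same_sign[OF cover f g that]] by simp
  have bounded: "\<bar>?h $ j\<bar> \<le> 1" if "j \<in> JI" for j
  proof -
    have "\<bar>f $ j\<bar> \<le> 1" "\<bar>g $ j\<bar> \<le> 1" using f g that unfolding Cx_def by auto
    then have "u * \<bar>f $ j\<bar> + v * \<bar>g $ j\<bar> \<le> u * 1 + v * 1"
      using uv by (intro add_mono mult_left_mono) auto
    then show ?thesis using abs_h[OF that] uv by simp
  qed
  have "nonincr_on_JI (\<lambda>j. \<bar>?h $ j\<bar>)"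
    unfolding nonincr_on_JI_def
  proof (intro ballI impI)
    fix j j' :: 'a assume jj: "j \<in> JI" "j' \<in> JI" "j \<le> j'"
    have "\<bar>f $ j'\<bar> \<le> \<bar>f $ j\<bar>" "\<bar>g $ j'\<bar> \<le> \<bar>g $ j\<bar>"
      using f g jj unfolding Cx_def nonincr_on_JI_def by auto
    then have "u * \<bar>f $ j'\<bar> + v * \<bar>g $ j'\<bar> \<le> u * \<bar>f $ j\<bar> + v * \<bar>g $ j\<bar>"
      using uv by (intro add_mono mult_left_mono) auto
    then show "\<bar>?h $ j'\<bar> \<le> \<bar>?h $ j\<bar>" using abs_h jj by simp
  qed
  moreover have "?h $ j \<ge> 0" if "j \<in> eta x" for j
    using f g that uv unfolding Cx_def by auto
  moreover have "?h $ j \<le> 0" if "j \<in> eta x'" for j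
  proof -
    have "f $ j \<le> 0" "g $ j \<le> 0" using f g that unfolding Cx_def by auto
    then show ?thesis using uv by (simp add: add_nonpos_nonpos mult_nonneg_nonpos)
  qed
  moreover have "-1 \<le> ?h $ j \<and> ?h $ j \<le> 1" if "j \<in> JI" for j
    using bounded[OF that] unfolding abs_le_iff by linarith
  ultimately show "?h \<in> Cx x x'"
    using f g unfolding Cx_def by auto
qed

lemma Dx_subset_Cx: "Dx x x' \<subseteq> Cx x x'"
  unfolding Dx_def Cx_def by auto

lemma Dx_finite: "finite (Dx (x::'a::{finite,order}) x')"
proof -
  let ?V = "vec_lambda ` (PiE UNIV (\<lambda>_. {-1, 0, 1::real}))"
  have "Dx x x' \<subseteq> ?V"
  proof
    fix f assume "f \<in> Dx x x'"
    then have "vec_nth f \<in> PiE UNIV (\<lambda>_. {-1, 0, 1::real})"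
      unfolding Dx_def by (auto simp: PiE_def Pi_def)
    then show "f \<in> ?V" by (metis image_eqI vec_nth_inverse)
  qed
  moreover have "finite ?V" by (intro finite_imageI finite_PiE) auto
  ultimately show ?thesis by (rule finite_subset)
qed

lemma convex_comb_at_bound:
  fixes a b c u :: real
  assumes "0 < u" "u < 1" "a \<le> c" "b \<le> c" "(1 - u) * a + u * b = c"
  shows "a = c \<and> b = c"
proof (rule ccontr)
  assume "\<not> (a = c \<and> b = c)"
  then have "a < c \<or> b < c" using assms by auto
  then have "(1 - u) * a + u * b < (1 - u) * c + u * c"
  proof
    assume "a < c"
    then have "(1 - u) * a < (1 - u) * c" using assms by simp
    moreover have "u * b \<le> u * c" using assms by simp
    ultimately show ?thesis by linarith
  next
    assume "b < c"
    then have "u * b < u * c" using assms by simp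
    moreover have "(1 - u) * a \<le> (1 - u) * c" using assms by simp
    ultimately show ?thesis by linarith
  qed
  then show False using assms by (simp add: algebra_simps)
qed

(* Each coordinate of v is at a bound of
   the range that Cx allows for that coordinate: 1 or -1 at the box bounds, and 0 at
   the bound given by the sign constraint (available by the covering hypothesis). *)
lemma Dx_extreme:
  assumes cover: "JI \<subseteq> eta x \<union> eta x'" and v: "v \<in> Dx x x'"
  shows "v extreme_point_of (Cx x x')"
  unfolding extreme_point_of_def
proof (intro conjI ballI notI)
  show "v \<in> Cx x x'" using v Dx_subset_Cx by blast
next
  fix a b assume a: "a \<in> Cx x x'" and b: "b \<in> Cx x x'" and "v \<in> open_segment a b"
  then obtain u where ab: "a \<noteq> b" "0 < u" "u < 1" and vu: "v = (1 - u) *\<^sub>R a + u *\<^sub>R b"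
    unfolding in_segment by blast
  have "a $ j = b $ j" for j
  proof (cases "j \<in> JI")
    case False
    then show ?thesis using a b unfolding Cx_def by auto
  next
    case True
    have "v $ j = (1 - u) * a $ j + u * b $ j" using vu by simp
    then have vj: "(1 - u) * a $ j + u * b $ j = v $ j"
      and neg: "(1 - u) * (- a $ j) + u * (- b $ j) = - v $ j" by (simp_all add: algebra_simps)
    have box: "a $ j \<le> 1" "b $ j \<le> 1" "- a $ j \<le> 1" "- b $ j \<le> 1"
      using a b True unfolding Cx_def by auto
    have "v $ j \<in> {-1, 0, 1}" using v True unfolding Dx_def by auto
    moreover have "a $ j \<le> 0 \<and> b $ j \<le> 0 \<or> - a $ j \<le> 0 \<and> - b $ j \<le> 0"
      using Cx_same_sign[OF cover a b True] by auto
    ultimately show ?thesis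
      using convex_comb_at_bound[OF ab(2,3) _ _ vj] convex_comb_at_bound[OF ab(2,3) _ _ neg] box
      by auto
  qed
  then show False using ab by (simp add: vec_eq_iff)
qed

definition sign_vec :: "(real, 'a::finite) vec \<Rightarrow> (real, 'a) vec" where
  "sign_vec f = (\<chi> j. sgn (f $ j))"

lemma sign_vec_in_Dx:
  assumes f: "f \<in> Cx x x'"
  shows "sign_vec f \<in> Dx x x'"
proof -
  have "\<bar>sgn (f $ j')\<bar> \<le> \<bar>sgn (f $ j)\<bar>" if "j \<in> JI" "j' \<in> JI" "j \<le> j'" for j j'
  proof -
    have "\<bar>f $ j'\<bar> \<le> \<bar>f $ j\<bar>" using f that unfolding Cx_def nonincr_on_JI_def by auto
    then show ?thesis by (auto simp: sgn_if)
  qed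
  then show ?thesis
    using f unfolding Dx_def Cx_def sign_vec_def nonincr_on_JI_def by (auto simp: sgn_if)
qed

(* The peeling step: removing m times the sign vector from f, where m is at most the
   least nonzero |f j|, and rescaling by 1/(1 - m) stays in Cx; coordinatewise it
   maps |f j| to (|f j| - m)/(1 - m) and keeps signs, so bounds, monotonicity of |.|
   and sign constraints survive. *)
definition peel :: "real \<Rightarrow> (real, 'a::finite) vec \<Rightarrow> (real, 'a) vec" where
  "peel m f = (1 / (1 - m)) *\<^sub>R (f - m *\<^sub>R sign_vec f)"

lemma peel_nth:
  assumes "m < 1" "f $ j \<noteq> 0 \<Longrightarrow> m \<le> \<bar>f $ j\<bar>"
  shows "\<bar>peel m f $ j\<bar> = (if f $ j = 0 then 0 else (\<bar>f $ j\<bar> - m) / (1 - m))"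
    and "sgn (peel m f $ j) = (if \<bar>f $ j\<bar> = m then 0 else sgn (f $ j))"
  using assms
  by (cases "f $ j > 0"; cases "f $ j = 0";
      auto simp: peel_def sign_vec_def sgn_if abs_divide divide_less_0_iff zero_less_divide_iff)+

lemma peel_in_Cx:
  assumes f: "f \<in> Cx x x'" and m: "m < 1" and m_le: "\<And>j. f $ j \<noteq> 0 \<Longrightarrow> m \<le> \<bar>f $ j\<bar>"
  shows "peel m f \<in> Cx x x'"
proof -
  let ?h = "peel m f"
  have abs_h: "\<bar>?h $ j\<bar> = (if f $ j = 0 then 0 else (\<bar>f $ j\<bar> - m) / (1 - m))" for j
    using peel_nth(1)[OF m m_le] .
  have sgn_h: "?h $ j \<ge> 0" if "f $ j \<ge> 0" for j
    using peel_nth(2)[OF m m_le, of j] that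
    by (cases "?h $ j = 0") (auto simp: sgn_if split: if_splits)
  have sgn_h': "?h $ j \<le> 0" if "f $ j \<le> 0" for j
    using peel_nth(2)[OF m m_le, of j] that
    by (cases "?h $ j = 0") (auto simp: sgn_if split: if_splits)
  have zero: "?h $ j = 0" if "f $ j = 0" for j using abs_h[of j] that by simp
  have bounded: "-1 \<le> ?h $ j \<and> ?h $ j \<le> 1" for j
  proof -
    have "\<bar>f $ j\<bar> \<le> 1" using f unfolding Cx_def by (cases "j \<in> JI") auto
    then have "\<bar>?h $ j\<bar> \<le> 1" using m by (simp add: abs_h divide_le_eq_1)
    then show ?thesis unfolding abs_le_iff by linarith
  qed
  have "\<bar>?h $ j'\<bar> \<le> \<bar>?h $ j\<bar>" if jj: "j \<in> JI" "j' \<in> JI" "j \<le> j'" for j j'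
  proof -
    have le: "\<bar>f $ j'\<bar> \<le> \<bar>f $ j\<bar>" using f jj unfolding Cx_def nonincr_on_JI_def by auto
    then have "(\<bar>f $ j'\<bar> - m) / (1 - m) \<le> (\<bar>f $ j\<bar> - m) / (1 - m)"
      using m by (intro divide_right_mono) auto
    then show ?thesis using le abs_h[of j] abs_h[of j'] by auto
  qed
  then show ?thesis
    using f bounded zero sgn_h sgn_h' unfolding Cx_def nonincr_on_JI_def
    by auto
qed

lemma peel_decomposition:
  assumes "m < 1"
  shows "f = m *\<^sub>R sign_vec f + (1 - m) *\<^sub>R peel m f"
proof -
  have "(1 - m) *\<^sub>R peel m f = f - m *\<^sub>R sign_vec f"
    using assms by (simp add: peel_def)
  then show ?thesis by simp
qed

(* If all nonzero |f j| equal 1, f is its own sign vector; otherwise peel off the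
   least nonzero |f j| = m < 1, which kills at least one coordinate. *)
lemma Cx_subset_hull_Dx:
  "f \<in> Cx x x' \<Longrightarrow> f \<in> convex hull (Dx x x')"
proof (induction "card {j. f $ j \<noteq> 0}" arbitrary: f rule: less_induct)
  case less
  note f = less.prems
  let ?N = "{j. f $ j \<noteq> 0}"
  have s_hull: "sign_vec f \<in> convex hull (Dx x x')"
    using hull_inc[OF sign_vec_in_Dx[OF f]] .
  have bounded: "\<bar>f $ j\<bar> \<le> 1" for j
    using f unfolding Cx_def by (cases "j \<in> JI") auto
  show ?case
  proof (cases "\<forall>j\<in>?N. \<bar>f $ j\<bar> = 1")
    case True
    have "f $ j = sgn (f $ j)" for j
    proof (cases "f $ j = 0")
      case False
      then have "\<bar>f $ j\<bar> = 1" using True by blast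
      then show ?thesis by (auto simp: sgn_if abs_if split: if_splits)
    qed simp
    then have "f = sign_vec f" by (simp add: sign_vec_def vec_eq_iff)
    then show ?thesis using s_hull by simp
  next
    case False
    define m where "m = Min ((\<lambda>j. \<bar>f $ j\<bar>) ` ?N)"
    have Nne: "?N \<noteq> {}" using False by blast
    have m_le: "m \<le> \<bar>f $ j\<bar>" if "f $ j \<noteq> 0" for j
      unfolding m_def using that by (intro Min_le) auto
    have "m \<in> (\<lambda>j. \<bar>f $ j\<bar>) ` ?N"
      unfolding m_def using Nne by (intro Min_in) auto
    then obtain j0 where j0: "f $ j0 \<noteq> 0" "\<bar>f $ j0\<bar> = m" by auto
    obtain j1 where "f $ j1 \<noteq> 0" "\<bar>f $ j1\<bar> \<noteq> 1" using False by blast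
    then have m_pos: "0 < m" and m_lt: "m < 1"
      using j0 m_le[of j1] bounded[of j1] by auto
    have "{j. peel m f $ j \<noteq> 0} \<subset> ?N"
    proof
      show "{j. peel m f $ j \<noteq> 0} \<subseteq> ?N"
      proof (intro subsetI CollectI notI)
        fix j assume "j \<in> {j. peel m f $ j \<noteq> 0}" "f $ j = 0"
        then show False using peel_nth(1)[OF m_lt m_le, of j] by simp
      qed
      have "peel m f $ j0 = 0" using peel_nth(1)[OF m_lt m_le, of j0] j0 by simp
      then show "{j. peel m f $ j \<noteq> 0} \<noteq> ?N" using j0 by blast
    qed
    then have "card {j. peel m f $ j \<noteq> 0} < card ?N" by (intro psubset_card_mono) auto
    then have h_hull: "peel m f \<in> convex hull (Dx x x')"
      using less.hyps peel_in_Cx[OF f m_lt m_le] by blast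
    show ?thesis
      using convexD[OF convex_convex_hull s_hull h_hull, of m "1 - m"] m_pos m_lt
      by (simp flip: peel_decomposition[OF m_lt])
  qed
qed

theorem mainTheorem5:
  fixes x x' :: "'a::{finite, distrib_lattice, bounded_lattice}"
  assumes "inf x x' = bot" and "sup x x' = top"
  shows "convex (Cx x x') \<and> polytope (Cx x x')
         \<and> {v. v extreme_point_of (Cx x x')} = Dx x x'"
proof -
  have cover: "JI \<subseteq> eta x \<union> eta x'" using JI_covered[OF assms(2)] .
  have convex: "convex (Cx x x')" using Cx_convex[OF cover] .
  have hull: "Cx x x' = convex hull (Dx x x')"
    using Cx_subset_hull_Dx hull_minimal[where S = convex, OF Dx_subset_Cx convex] by blast
  have "polytope (Cx x x')" unfolding polytope_def using hull Dx_finite by blast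
  moreover have "{v. v extreme_point_of (Cx x x')} \<subseteq> Dx x x'"
    unfolding hull by (rule extreme_points_of_convex_hull)
  moreover have "Dx x x' \<subseteq> {v. v extreme_point_of (Cx x x')}"
    using Dx_extreme[OF cover] by blast
  ultimately show ?thesis using convex by blast
qed

end
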